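(* Let $G$ be a finitely generated group, $K$ a subgroup of $G$, $\Sigma$ a finite alphabet and $\psi:\Sigma\to G$ a map such that $\psi(\Sigma)$ generates $G$ as a semigroup. Then the word problem $L(G,K,\psi)=\{w\in\Sigma^*:\psi(w)\in K\}$ is growth sensitive, i.e. for every finite non-empty set $F\subset\Sigma^+$ consisting of factors of elements of $L(G,K,\psi)$ one has $\mathsf h(L(G,K,\psi)^F)<\mathsf h(L(G,K,\psi))$.
   Context: $\psi$ is extended to a monoid homomorphism $\Sigma^*\to G$ by $\psi(a_1\cdots a_n)=\psi(a_1)\cdots\psi(a_n)$ and $\psi(\epsilon)=1_G$. $\Sigma^+=\Sigma^*\setminus\{\epsilon\}$; a factor of $a_1\cdots a_n$ is a word $a_i\cdots a_j$ with $1\le i\le j\le n$. For $L\subset\Sigma^*$, $\mathsf h(L)=\limsup_{n\to\infty}\frac1n\log|\{w\in L:|w|=n\}|$ and $L^F=\{w\in L:\text{no }v\in F\text{ is a factor of }w\}$. *)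

theory Defs
  imports "HOL-Algebra.Algebra" "HOL-Library.Sublist" "HOL-Library.Extended_Real"
          "HOL-Library.Liminf_Limsup"
begin

definition psi_word :: "('g, 'b) monoid_scheme \<Rightarrow> ('a \<Rightarrow> 'g) \<Rightarrow> 'a list \<Rightarrow> 'g" where
  "psi_word G psi w = foldr (\<lambda>a g. psi a \<otimes>\<^bsub>G\<^esub> g) w \<one>\<^bsub>G\<^esub>"

definition word_problem :: "('g, 'b) monoid_scheme \<Rightarrow> 'g set \<Rightarrow> 'a set \<Rightarrow> ('a \<Rightarrow> 'g) \<Rightarrow> 'a list set" where
  "word_problem G K Alph psi = {w \<in> lists Alph. psi_word G psi w \<in> K}"

definition avoid :: "'a list set \<Rightarrow> 'a list set \<Rightarrow> 'a list set" where
  "avoid L F = {w \<in> L. \<forall>v\<in>F. \<not> sublist v w}"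

definition growth :: "'a list set \<Rightarrow> ereal" where
  "growth L = limsup (\<lambda>n. let c = card {w \<in> L. length w = n} in
       if c = 0 then - \<infinity> else ereal (ln (real c) / real n))"

definition generates_as_semigroup :: "('g, 'b) monoid_scheme \<Rightarrow> 'a set \<Rightarrow> ('a \<Rightarrow> 'g) \<Rightarrow> bool" where
  "generates_as_semigroup G Alph psi \<longleftrightarrow>
     (\<forall>g\<in>carrier G. \<exists>w\<in>lists Alph. w \<noteq> [] \<and> psi_word G psi w = g)"

definition finitely_generated_group :: "('g, 'b) monoid_scheme \<Rightarrow> bool" where
  "finitely_generated_group G \<longleftrightarrow>
     (\<exists>S. finite S \<and> S \<subseteq> carrier G \<and> generate G S = carrier G)"

end

theory Submission
  imports Defs
begin

text \<open>
  Pick one forbidden word v and, using that \<psi>(\<Sigma>) generates G as a semigroup, a word z with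
  \<psi>(vz) = 1; inserting vz anywhere into a word keeps it in the word problem L.  Cut a word of L
  of length n that avoids v into n div T blocks of length T = t|v| and insert vz into every block
  at one of the t offsets 0, |v|, 2|v|, \<dots>: the result determines the offsets and the original word,
  since offsets are |v| apart and two different decodings of a block would put an occurrence of v
  inside one of the original blocks.  Hence
  t^(n div T) b(n) \<le> a(n + (n div T)|vz|) for the slice sizes a of L and b of the v-avoiding words,
  and as t > |\<Sigma>|^|vz| this pushes the growth of L strictly above that of the v-avoiding words.
\<close>

lemma psi_word_Nil [simp]: "psi_word G psi [] = \<one>\<^bsub>G\<^esub>"
  by (simp add: psi_word_def)

lemma psi_word_Cons [simp]: "psi_word G psi (a # w) = psi a \<otimes>\<^bsub>G\<^esub> psi_word G psi w"
  by (simp add: psi_word_def)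

context monoid
begin

lemma psi_word_closed: "psi ` set w \<subseteq> carrier G \<Longrightarrow> psi_word G psi w \<in> carrier G"
  by (induction w) auto

lemma psi_word_append:
  assumes "psi ` set x \<subseteq> carrier G" and "psi ` set y \<subseteq> carrier G"
  shows "psi_word G psi (x @ y) = psi_word G psi x \<otimes> psi_word G psi y"
  using assms(1)
proof (induction x)
  case Nil
  then show ?case using psi_word_closed[OF assms(2)] by simp
next
  case (Cons a x)
  then show ?case using psi_word_closed[OF assms(2)] psi_word_closed[where w=x] by (simp add: m_assoc)
qed

end

definition insertion_closed :: "'a list \<Rightarrow> 'a list set \<Rightarrow> bool" where
  "insertion_closed p L \<longleftrightarrow> (\<forall>x y. x @ y \<in> L \<longrightarrow> x @ p @ y \<in> L)"

lemma (in monoid) insertion_closed_word_problem: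
  assumes "psi ` Alph \<subseteq> carrier G" and "p \<in> lists Alph" and "psi_word G psi p = \<one>"
  shows "insertion_closed p (word_problem G K Alph psi)"
  unfolding insertion_closed_def word_problem_def
proof (intro allI impI, elim CollectE conjE)
  fix x y assume xy: "x @ y \<in> lists Alph" and K: "psi_word G psi (x @ y) \<in> K"
  have cx: "psi ` set x \<subseteq> carrier G" and cy: "psi ` set y \<subseteq> carrier G"
    and cp: "psi ` set p \<subseteq> carrier G"
    using xy assms(1,2) by auto
  have "psi_word G psi (x @ p @ y) = psi_word G psi x \<otimes> (psi_word G psi p \<otimes> psi_word G psi y)"
    using psi_word_append[OF cx, of "p @ y"] psi_word_append[OF cp cy] cp cy by (simp add: image_Un)
  also have "\<dots> = psi_word G psi (x @ y)"
    using cx cy by (simp add: assms(3) psi_word_append psi_word_closed)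
  finally show "x @ p @ y \<in> {w \<in> lists Alph. psi_word G psi w \<in> K}"
    using xy assms(2) K by simp
qed

lemma insertion_closed_replicate:
  assumes "insertion_closed p L" and "[] \<in> L"
  shows "concat (replicate N p) \<in> L"
proof (induction N)
  case (Suc N)
  then show ?case using assms(1) unfolding insertion_closed_def by (metis append_Nil concat.simps(2) replicate_Suc)
qed (simp add: assms(2))

fun insert_blocks :: "nat \<Rightarrow> 'a list \<Rightarrow> nat list \<Rightarrow> 'a list \<Rightarrow> 'a list" where
  "insert_blocks T p [] w = w"
| "insert_blocks T p (d # ds) w =
     take d w @ p @ drop d (take T w) @ insert_blocks T p ds (drop T w)"

lemma length_insert_blocks:
  "\<forall>d\<in>set ds. d \<le> T \<Longrightarrow> length ds * T \<le> length w \<Longrightarrow>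
   length (insert_blocks T p ds w) = length w + length ds * length p"
  by (induction ds arbitrary: w) auto

lemma insert_blocks_mem:
  assumes "insertion_closed p L"
  shows "\<forall>d\<in>set ds. d \<le> T \<Longrightarrow> x @ w \<in> L \<Longrightarrow> x @ insert_blocks T p ds w \<in> L"
proof (induction ds arbitrary: x w)
  case (Cons d ds)
  have "drop d w = drop d (take T w) @ drop T w"
    using Cons.prems(1) append_take_drop_id[of T w] drop_append[of d "take T w" "drop T w"]
    by (cases "T \<le> length w") auto
  moreover have "(x @ take d w) @ p @ drop d w \<in> L"
    using assms Cons.prems(2) unfolding insertion_closed_def by (metis append_assoc append_take_drop_id)
  ultimately have "(x @ take d w @ p @ drop d (take T w)) @ drop T w \<in> L" by simp
  then show ?case using Cons.IH Cons.prems(1) by fastforce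
qed simp

lemma sublist_if_append_eq:
  assumes "x @ v @ y = u @ y'" and "length x + length v \<le> length u"
  shows "sublist v u"
proof -
  have "take (length x + length v) u = x @ v"
    using arg_cong[OF assms(1), of "take (length x + length v)"] assms(2) by simp
  moreover have "sublist v (x @ v @ [])" by (rule sublist_appendI)
  ultimately have "sublist v (take (length x + length v) u)" by simp
  then show ?thesis using sublist_take sublist_order.order.trans by blast
qed

lemma insert_at_offset_inj:
  assumes "d \<le> T" "d' \<le> T" and spaced: "d < d' \<longrightarrow> d + length v \<le> d'" "d' < d \<longrightarrow> d' + length v \<le> d"
    and "length u = T" "length u' = T" "\<not> sublist v u" "\<not> sublist v u'"
    and eq: "take d u @ v @ z @ drop d u = take d' u' @ v @ z @ drop d' u'"
  shows "d = d' \<and> u = u'"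
proof -
  have not_less: "\<not> d1 < d2"
    if "d1 < d2 \<longrightarrow> d1 + length v \<le> d2" "d1 \<le> T" "d2 \<le> T" "length u1 = T" "length u2 = T"
      "\<not> sublist v u2" "take d1 u1 @ v @ z @ drop d1 u1 = take d2 u2 @ v @ z @ drop d2 u2"
    for d1 d2 :: nat and u1 u2
  proof
    assume "d1 < d2"
    then have "sublist v (take d2 u2)"
      using that by (intro sublist_if_append_eq[of "take d1 u1" v "z @ drop d1 u1" "take d2 u2"]) auto
    with that(6) show False by (meson sublist_take sublist_order.order.trans)
  qed
  have "d = d'"
    using not_less[of d d' u u'] not_less[of d' d u' u] assms by (metis linorder_neqE_nat)
  then have "take d u = take d u' \<and> drop d u = drop d u'"
    using eq assms by (simp add: append_eq_append_conv)
  then show ?thesis using \<open>d = d'\<close> by (metis append_take_drop_id)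
qed

lemma insert_blocks_inj:
  assumes spaced: "\<forall>d\<in>P. \<forall>d'\<in>P. d < d' \<longrightarrow> d + length v \<le> d'" and bounded: "\<forall>d\<in>P. d \<le> T"
  shows "set ds \<subseteq> P \<Longrightarrow> set ds' \<subseteq> P \<Longrightarrow> length ds = length ds' \<Longrightarrow>
    length w = length w' \<Longrightarrow> length ds * T \<le> length w \<Longrightarrow> \<not> sublist v w \<Longrightarrow> \<not> sublist v w' \<Longrightarrow>
    insert_blocks T (v @ z) ds w = insert_blocks T (v @ z) ds' w' \<Longrightarrow> ds = ds' \<and> w = w'"
proof (induction ds arbitrary: ds' w w')
  case (Cons d ds)
  obtain d' ds'' where ds': "ds' = d' # ds''" using Cons.prems(3) by (cases ds') auto
  have dP: "d \<in> P" "d' \<in> P" using Cons.prems(1,2) ds' by auto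
  have TL: "T \<le> length w" "T \<le> length w'" using Cons.prems(4,5) by auto
  then have T: "length (take T w) = T" "length (take T w') = T" by auto
  let ?B = "take d w @ (v @ z) @ drop d (take T w)" and ?B' = "take d' w' @ (v @ z) @ drop d' (take T w')"
  have dT: "d \<le> T" "d' \<le> T" using bounded dP by auto
  have lenB: "length ?B = length ?B'" using TL dT by simp
  have eqB: "?B @ insert_blocks T (v @ z) ds (drop T w) = ?B' @ insert_blocks T (v @ z) ds'' (drop T w')"
    using Cons.prems(8) ds' by simp
  have "?B = ?B'"
    and rest: "insert_blocks T (v @ z) ds (drop T w) = insert_blocks T (v @ z) ds'' (drop T w')"
    using append_eq_append_conv[of ?B ?B'] lenB eqB by blast+
  then have blocks: "take d (take T w) @ v @ z @ drop d (take T w) = take d' (take T w') @ v @ z @ drop d' (take T w')"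
    using bounded dP by (simp add: min_absorb1)
  have "\<not> sublist v (take T w)" "\<not> sublist v (take T w')"
    using Cons.prems(6,7) sublist_take sublist_order.order.trans by blast+
  then have head: "d = d' \<and> take T w = take T w'"
    using spaced bounded dP T blocks by (intro insert_at_offset_inj) auto
  have "\<not> sublist v (drop T w)" "\<not> sublist v (drop T w')"
    using Cons.prems(6,7) sublist_drop sublist_order.order.trans by blast+
  then have "ds = ds'' \<and> drop T w = drop T w'"
    using Cons.prems rest ds' by (intro Cons.IH) auto
  with head show ?case using ds' by (metis append_take_drop_id)
qed simp

lemma card_avoiding_mult_le:
  assumes closed: "insertion_closed (v @ z) L"
    and spaced: "\<forall>d\<in>P. \<forall>d'\<in>P. d < d' \<longrightarrow> d + length v \<le> d'" and bounded: "\<forall>d\<in>P. d \<le> T"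
    and "finite P" and "k * T \<le> n"
    and fin: "finite {w \<in> L. length w = n + k * length (v @ z)}"
  shows "card P ^ k * card {w \<in> L. \<not> sublist v w \<and> length w = n}
    \<le> card {w \<in> L. length w = n + k * length (v @ z)}"
proof -
  let ?D = "{ds. set ds \<subseteq> P \<and> length ds = k} \<times> {w \<in> L. \<not> sublist v w \<and> length w = n}"
  let ?f = "\<lambda>(ds, w). insert_blocks T (v @ z) ds w"
  have inj: "inj_on ?f ?D"
  proof (rule inj_onI)
    fix x y assume "x \<in> ?D" "y \<in> ?D" "?f x = ?f y"
    moreover obtain ds w ds' w' where "x = (ds, w)" "y = (ds', w')" by (cases x; cases y) auto
    ultimately show "x = y"
      using insert_blocks_inj[OF spaced bounded, of ds ds' w w' z] assms(5) by auto
  qed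
  have img: "?f ` ?D \<subseteq> {w \<in> L. length w = n + k * length (v @ z)}"
  proof
    fix y assume "y \<in> ?f ` ?D"
    then obtain ds w where "y = insert_blocks T (v @ z) ds w" "set ds \<subseteq> P" "length ds = k"
      "w \<in> L" "length w = n"
      by auto
    moreover have "\<forall>d\<in>set ds. d \<le> T" using bounded \<open>set ds \<subseteq> P\<close> by blast
    ultimately show "y \<in> {w \<in> L. length w = n + k * length (v @ z)}"
      using insert_blocks_mem[OF closed, of ds T "[]" w] length_insert_blocks[of ds T w] assms(5)
      by auto
  qed
  from card_inj_on_le[OF inj img fin] show ?thesis
    using \<open>finite P\<close> by (simp add: card_cartesian_product card_lists_length_eq)
qed

lemma frequently_less_Limsup:
  fixes f :: "'a \<Rightarrow> 'b :: complete_linorder"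
  assumes "y < Limsup F f"
  shows "\<exists>\<^sub>F x in F. y < f x"
proof (rule ccontr)
  assume "\<not> (\<exists>\<^sub>F x in F. y < f x)"
  then have "\<forall>\<^sub>F x in F. f x \<le> y" by (simp add: not_frequently not_less)
  then have "Limsup F f \<le> y" by (rule Limsup_bounded)
  with assms show False by simp
qed

lemma Limsup_ge_if_frequently:
  fixes f :: "'a \<Rightarrow> 'b :: complete_linorder"
  assumes "\<exists>\<^sub>F x in F. c \<le> f x"
  shows "c \<le> Limsup F f"
  unfolding Limsup_def
proof (rule INF_greatest, clarify)
  fix P assume "eventually P F"
  then obtain x where "P x" "c \<le> f x"
    using frequently_ex[OF frequently_eventually_conj[OF assms]] by blast
  then show "c \<le> Sup (f ` Collect P)" by (meson SUP_upper2 mem_Collect_eq)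
qed

lemma frequently_sequentially_reindex:
  assumes "\<exists>\<^sub>F n in sequentially. P n" and "\<And>n. P n \<Longrightarrow> Q (g n)" and "\<And>n. n \<le> g (n :: nat)"
  shows "\<exists>\<^sub>F n in sequentially. Q n"
  using assms unfolding frequently_sequentially by (meson order.trans)

definition log_rate :: "(nat \<Rightarrow> nat) \<Rightarrow> nat \<Rightarrow> ereal" where
  "log_rate a n = (if a n = 0 then - \<infinity> else ereal (ln (real (a n)) / real n))"

lemma growth_eq_limsup_log_rate: "growth L = limsup (log_rate (\<lambda>n. card {w \<in> L. length w = n}))"
  by (simp add: growth_def log_rate_def[abs_def] Let_def)

lemma log_rate_mono:
  assumes "a n \<le> b n"
  shows "log_rate a n \<le> log_rate b n"
  using assms by (simp add: log_rate_def divide_right_mono)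

lemma limsup_log_rate_nonneg:
  assumes "\<exists>\<^sub>F n in sequentially. a n \<noteq> 0"
  shows "0 \<le> limsup (log_rate a)"
  using assms by (intro Limsup_ge_if_frequently) (auto elim!: frequently_elim1 simp: log_rate_def)

lemma limsup_log_rate_le_ln:
  fixes C :: nat
  assumes "0 < C" and "\<And>n. b n \<le> C ^ n"
  shows "limsup (log_rate b) \<le> ln C"
proof (intro Limsup_bounded always_eventually allI)
  fix n
  show "log_rate b n \<le> ln C"
  proof (cases "b n = 0")
    case False
    have "ln (real (b n)) \<le> ln (real C ^ n)"
      using False assms by (simp flip: of_nat_power)
    also have "\<dots> = real n * ln C" using assms(1) by (simp add: ln_realpow)
    finally show ?thesis
      using False assms(1) by (cases "n = 0") (auto simp: log_rate_def divide_le_eq mult.commute)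
  qed (simp add: log_rate_def)
qed

lemma log_rate_pumped:
  fixes a b :: "nat \<Rightarrow> nat" and t T m n :: nat and r D :: real
  assumes "0 < T" "0 < m" "0 < t" "0 < D" "2 * T \<le> n"
    and ln_t: "ln t = D * T + m * r"
    and pump: "t ^ (n div T) * b n \<le> a (n + n div T * m)"
    and rate_b: "ereal (r - D / 8) < log_rate b n"
  shows "ereal (r + D / (8 * m)) < log_rate a (n + n div T * m)"
proof -
  define k where "k = n div T"
  define N where "N = n + k * m"
  have "b n \<noteq> 0" and "0 < n" using rate_b assms(1,5) by (auto simp: log_rate_def split: if_splits)
  then have ln_b: "n * (r - D / 8) < ln (b n)"
    using rate_b by (simp add: log_rate_def less_divide_eq mult.commute)
  have "0 < t ^ k * b n" using \<open>b n \<noteq> 0\<close> assms(3) by simp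
  moreover have "real (t ^ k * b n) \<le> real (a N)"
    using pump unfolding k_def N_def by (simp only: of_nat_le_iff)
  ultimately have "ln (real (t ^ k * b n)) \<le> ln (a N)"
    by (intro ln_mono) simp_all
  moreover have "ln (real (t ^ k * b n)) = k * ln t + ln (b n)"
    using \<open>b n \<noteq> 0\<close> assms(3) by (simp add: ln_mult ln_realpow)
  ultimately have ln_a: "k * (D * T + m * r) + n * (r - D / 8) < ln (a N)"
    using ln_b ln_t by simp
  have "real n < real k * T + T"
    using mod_less_divisor[OF assms(1), of n] div_mult_mod_eq[of n T] unfolding k_def
    by (metis add_less_cancel_left of_nat_add of_nat_less_iff of_nat_mult)
  then have "2 * n * D < 7 * (k * T) * D" using assms(4,5) by simp
  moreover have "D / (8 * m) \<le> D / 8"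
    using assms(2,4) by (intro divide_left_mono) auto
  then have "n * (D / (8 * m)) \<le> n * (D / 8)" by (intro mult_left_mono) auto
  moreover have "D / 8 \<le> D * T / 8"
    using assms(1,4) by (simp add: mult_le_cancel_left1)
  then have "k * (D / 8) \<le> k * (D * T / 8)" by (intro mult_left_mono) auto
  moreover have "(r + D / (8 * m)) * N = r * n + r * k * m + n * (D / (8 * m)) + k * (D / 8)"
    using assms(2) by (simp add: N_def field_simps)
  ultimately have "(r + D / (8 * m)) * N < k * (D * T + m * r) + n * (r - D / 8)"
    by (simp add: algebra_simps)
  with ln_a have "(r + D / (8 * m)) * N < ln (a N)" by linarith
  moreover have "0 < a N"
    using \<open>0 < t ^ k * b n\<close> pump unfolding N_def k_def by (rule less_le_trans)
  moreover have "0 < N" using \<open>0 < n\<close> by (simp add: N_def)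
  ultimately have "r + D / (8 * m) < ln (a N) / N" by (simp add: less_divide_eq)
  with \<open>0 < a N\<close> show ?thesis by (simp add: log_rate_def N_def k_def)
qed

lemma limsup_log_rate_less:
  fixes a b :: "nat \<Rightarrow> nat" and C t T m :: nat
  assumes "0 < T" "0 < m" "0 < C" "C ^ m < t"
    and pump: "\<And>n. t ^ (n div T) * b n \<le> a (n + n div T * m)"
    and "\<And>n. b n \<le> C ^ n"
    and "\<exists>\<^sub>F n in sequentially. a n \<noteq> 0"
  shows "limsup (log_rate b) < limsup (log_rate a)"
proof (cases "limsup (log_rate b)")
  case MInf
  then show ?thesis using limsup_log_rate_nonneg[OF assms(7)] by simp
next
  case PInf
  then show ?thesis using limsup_log_rate_le_ln[OF assms(3,6)] by simp
next
  case (real r)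
  have "r \<le> ln C" using limsup_log_rate_le_ln[OF assms(3,6)] real by simp
  then have "m * r \<le> m * ln C" by (simp add: mult_left_mono)
  also have "\<dots> = ln (real C ^ m)" using assms(3) by (simp add: ln_realpow)
  also have "\<dots> < ln t" using assms(3,4) by (simp flip: of_nat_power)
  finally have "0 < ln t - m * r" by simp
  have "0 < t" using assms(4) by simp
  \<comment> \<open>D is the surplus per letter of the pumping; its eighths absorb all the approximation errors.\<close>
  define D where "D = (ln t - m * r) / T"
  have "0 < D" and ln_t: "ln t = D * T + m * r"
    using \<open>0 < ln t - m * r\<close> assms(1) by (simp_all add: D_def)
  have "\<exists>\<^sub>F n in sequentially. ereal (r - D / 8) < log_rate b n"
    using real \<open>0 < D\<close> by (intro frequently_less_Limsup) simp
  then have "\<exists>\<^sub>F n in sequentially. 2 * T \<le> n \<and> ereal (r - D / 8) < log_rate b n"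
    by (rule frequently_eventually_conj) simp
  then have "\<exists>\<^sub>F n in sequentially. ereal (r + D / (8 * m)) \<le> log_rate a n"
  proof (rule frequently_sequentially_reindex[where g = "\<lambda>n. n + n div T * m"])
    fix n assume "2 * T \<le> n \<and> ereal (r - D / 8) < log_rate b n"
    then show "ereal (r + D / (8 * m)) \<le> log_rate a (n + n div T * m)"
      using log_rate_pumped[where a = a and b = b, OF assms(1,2) \<open>0 < t\<close> \<open>0 < D\<close> _ ln_t pump[of n]] by auto
  qed simp
  then have "ereal (r + D / (8 * m)) \<le> limsup (log_rate a)"
    by (rule Limsup_ge_if_frequently)
  moreover have "ereal r < ereal (r + D / (8 * m))" using \<open>0 < D\<close> assms(2) by simp
  ultimately show ?thesis unfolding real by (rule order.strict_trans2[rotated])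
qed

lemma finite_length_slice:
  assumes "finite Alph" and "L \<subseteq> lists Alph"
  shows "finite {w \<in> L. length w = n}"
  by (rule finite_subset[OF _ finite_lists_length_eq[OF assms(1), of n]]) (use assms(2) in auto)

lemma card_length_slice_le:
  assumes "finite Alph" and "L \<subseteq> lists Alph"
  shows "card {w \<in> L. length w = n} \<le> card Alph ^ n"
proof -
  have "card {w \<in> L. length w = n} \<le> card {w. set w \<subseteq> Alph \<and> length w = n}"
    by (rule card_mono[OF finite_lists_length_eq[OF assms(1)]]) (use assms(2) in auto)
  then show ?thesis by (simp add: card_lists_length_eq[OF assms(1)])
qed

lemma growth_mono:
  assumes "L \<subseteq> L'" and "\<And>n. finite {w \<in> L'. length w = n}"
  shows "growth L \<le> growth L'"
  unfolding growth_eq_limsup_log_rate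
  using assms by (intro Limsup_mono always_eventually allI log_rate_mono card_mono) auto

lemma card_avoiding_pumping:
  fixes t :: nat
  assumes "finite Alph" and "L \<subseteq> lists Alph" and closed: "insertion_closed (v @ z) L" and "v \<noteq> []"
  defines "T \<equiv> t * length v"
  shows "t ^ (n div T) * card {w \<in> L. \<not> sublist v w \<and> length w = n}
    \<le> card {w \<in> L. length w = n + n div T * length (v @ z)}"
proof -
  define P where "P = (\<lambda>c. c * length v) ` {..<t}"
  have "card P = t" using \<open>v \<noteq> []\<close> by (simp add: P_def card_image inj_on_def)
  have spaced: "\<forall>d\<in>P. \<forall>d'\<in>P. d < d' \<longrightarrow> d + length v \<le> d'"
  proof (intro ballI impI)
    fix d d' assume "d \<in> P" "d' \<in> P" "d < d'"
    then obtain c c' where "d = c * length v" "d' = c' * length v" and "c < c'" by (auto simp: P_def)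
    moreover from \<open>c < c'\<close> have "Suc c * length v \<le> c' * length v" by (intro mult_le_mono1) simp
    ultimately show "d + length v \<le> d'" by simp
  qed
  have bounded: "\<forall>d\<in>P. d \<le> T" by (auto simp: P_def T_def)
  have "n div T * T \<le> n" by (rule div_times_less_eq_dividend)
  then show ?thesis
    using card_avoiding_mult_le[OF closed spaced bounded _ _ finite_length_slice[OF assms(1,2)]]
    unfolding \<open>card P = t\<close> by (simp add: P_def)
qed

lemma frequently_length_slice_nonempty:
  assumes "finite Alph" and "L \<subseteq> lists Alph" and "[] \<in> L"
    and "insertion_closed p L" and "p \<noteq> []"
  shows "\<exists>\<^sub>F n in sequentially. card {w \<in> L. length w = n} \<noteq> 0"
  unfolding frequently_sequentially
proof
  fix N
  have "concat (replicate N p) \<in> L" using insertion_closed_replicate[OF assms(4,3)] .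
  moreover have "length (concat (replicate N p)) = N * length p"
    by (simp add: length_concat sum_list_replicate)
  ultimately have "card {w \<in> L. length w = N * length p} \<noteq> 0"
    using finite_length_slice[OF assms(1,2)] by auto
  then show "\<exists>n\<ge>N. card {w \<in> L. length w = n} \<noteq> 0"
    using \<open>p \<noteq> []\<close> by (intro exI[of _ "N * length p"]) (auto simp: Suc_le_eq)
qed

lemma growth_avoiding_less:
  assumes "finite Alph" and "L \<subseteq> lists Alph" and "[] \<in> L"
    and closed: "insertion_closed (v @ z) L" and "v \<noteq> []"
  shows "growth {w \<in> L. \<not> sublist v w} < growth L"
proof -
  define m t where "m = length (v @ z)" and "t = card Alph ^ m + 1"
  define a b where "a n = card {w \<in> L. length w = n}"
    and "b n = card {w \<in> L. \<not> sublist v w \<and> length w = n}" for n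
  have "v @ z \<in> L" using insertion_closed_replicate[OF closed \<open>[] \<in> L\<close>, of 1] by simp
  then have "set v \<subseteq> Alph" using assms(2) by auto
  then have "0 < card Alph" using assms(1) \<open>v \<noteq> []\<close> by (auto simp: card_gt_0_iff)
  have "b n \<le> card Alph ^ n" for n
    using card_length_slice_le[OF assms(1), of "{w \<in> L. \<not> sublist v w}"] assms(2) by (auto simp: b_def)
  moreover have "\<exists>\<^sub>F n in sequentially. a n \<noteq> 0"
    using frequently_length_slice_nonempty[OF assms(1-4)] \<open>v \<noteq> []\<close> by (simp add: a_def)
  ultimately have "limsup (log_rate b) < limsup (log_rate a)"
    using \<open>v \<noteq> []\<close> \<open>0 < card Alph\<close> card_avoiding_pumping[OF assms(1,2) closed \<open>v \<noteq> []\<close>, of t]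
    by (intro limsup_log_rate_less[of "t * length v" m "card Alph" t])
      (simp_all add: a_def b_def m_def t_def)
  moreover have "(\<lambda>n. card {w \<in> {w \<in> L. \<not> sublist v w}. length w = n}) = b"
    by (auto simp: fun_eq_iff b_def intro!: arg_cong[where f = card])
  ultimately show ?thesis
    unfolding growth_eq_limsup_log_rate a_def[abs_def, symmetric] by simp
qed

theorem mainTheorem17:
  fixes G :: "('g, 'b) monoid_scheme" and K :: "'g set" and Alph :: "'a set" and psi :: "'a \<Rightarrow> 'g"
  assumes "group G"
    and "finitely_generated_group G"
    and "subgroup K G"
    and "finite Alph"
    and "psi ` Alph \<subseteq> carrier G"
    and "generates_as_semigroup G Alph psi"
  shows "\<forall>F. finite F \<and> F \<noteq> {} \<and>
            (\<forall>v\<in>F. v \<in> lists Alph \<and> v \<noteq> [] \<and> (\<exists>w\<in>word_problem G K Alph psi. sublist v w))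
         \<longrightarrow> growth (avoid (word_problem G K Alph psi) F) < growth (word_problem G K Alph psi)"
proof (intro allI impI, elim conjE)
  fix F :: "'a list set"
  assume "F \<noteq> {}" and "\<forall>v\<in>F. v \<in> lists Alph \<and> v \<noteq> [] \<and> (\<exists>w\<in>word_problem G K Alph psi. sublist v w)"
  then obtain v where "v \<in> F" "v \<in> lists Alph" "v \<noteq> []" by blast
  interpret group G by fact
  define L where "L = word_problem G K Alph psi"
  have v: "psi ` set v \<subseteq> carrier G" using \<open>v \<in> lists Alph\<close> assms(5) by auto
  obtain z where "z \<in> lists Alph" and "psi_word G psi z = inv\<^bsub>G\<^esub> psi_word G psi v"
    using assms(6) psi_word_closed[OF v] unfolding generates_as_semigroup_def by blast
  moreover have "psi ` set z \<subseteq> carrier G" using \<open>z \<in> lists Alph\<close> assms(5) by auto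
  ultimately have "psi_word G psi (v @ z) = \<one>\<^bsub>G\<^esub>"
    using psi_word_append[OF v] r_inv[OF psi_word_closed[OF v]] by simp
  then have "insertion_closed (v @ z) L"
    using assms(5) \<open>v \<in> lists Alph\<close> \<open>z \<in> lists Alph\<close> unfolding L_def
    by (intro insertion_closed_word_problem) auto
  moreover have "L \<subseteq> lists Alph" and "[] \<in> L"
    using subgroup.one_closed[OF assms(3)] by (auto simp: L_def word_problem_def)
  ultimately have less: "growth {w \<in> L. \<not> sublist v w} < growth L"
    using growth_avoiding_less[OF assms(4)] \<open>v \<noteq> []\<close> by blast
  have "growth (avoid L F) \<le> growth {w \<in> L. \<not> sublist v w}"
    using \<open>v \<in> F\<close> finite_length_slice[OF assms(4), of "{w \<in> L. \<not> sublist v w}"] \<open>L \<subseteq> lists Alph\<close>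
    by (intro growth_mono) (auto simp: avoid_def)
  also note less
  finally show "growth (avoid (word_problem G K Alph psi) F) < growth (word_problem G K Alph psi)"
    unfolding L_def .
qed

end
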